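(* If $n$ is a non-negative integer, then $$\sum_{k = 1}^n \sum_{j = \lfloor n/2 \rfloor }^{k - 1} \frac{1}{n - j}\binom{j}{n - j} = F_{n + 1} - 1.$$
   Context: $F_n$ are the Fibonacci numbers ($F_0=0$, $F_1=1$, $F_{n}=F_{n-1}+F_{n-2}$). A sum whose upper limit is smaller than its lower limit is zero. *)

theory Defs
  imports Complex_Main "HOL-Number_Theory.Fib"
begin

end

theory Submission
  imports Defs
begin

(* Swapping the order of summation, the index j is counted once for each k with j < k \<le> n,
   i.e. n - j times, which cancels the factor 1/(n - j). The terms with j < n/2 vanish because
   then j < n - j, so the double sum is the diagonal sum of Pascal's triangle minus its
   last term (n choose 0) = 1, and that diagonal sum is F (n + 1). *)

lemma sum_triangle_swap:
  fixes g :: "nat \<Rightarrow> 'a::comm_semiring_1"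
  shows "(\<Sum>k = 1..n. \<Sum>j = a..k - 1. g j) = (\<Sum>j = a..<n. of_nat (n - j) * g j)"
proof (induction n)
  case 0
  show ?case by simp
next
  case (Suc n)
  have "(\<Sum>k = 1..Suc n. \<Sum>j = a..k - 1. g j)
      = (\<Sum>j = a..<n. of_nat (n - j) * g j) + (\<Sum>j = a..<Suc n. g j)"
    using Suc.IH by (simp add: atLeastLessThanSuc_atLeastAtMost)
  also have "\<dots> = (\<Sum>j = a..<Suc n. of_nat (Suc n - j) * g j)"
  proof (cases "a \<le> n")
    case True
    have "(\<Sum>j = a..<n. of_nat (Suc n - j) * g j)
        = (\<Sum>j = a..<n. of_nat (n - j) * g j) + (\<Sum>j = a..<n. g j)"
      by (simp add: sum.distrib[symmetric] Suc_diff_le algebra_simps)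
    with True show ?thesis
      by (simp add: sum.atLeastLessThan_Suc algebra_simps)
  qed simp
  finally show ?case .
qed

lemma sum_choose_diagonal_upper_half:
  "(\<Sum>j = n div 2..<n. j choose (n - j)) + 1 = fib (Suc n)"
proof -
  have lower_half: "(\<Sum>j = 0..<n div 2. j choose (n - j)) = 0"
    by (rule sum.neutral) auto
  have "(\<Sum>j = 0..n. j choose (n - j)) = (\<Sum>k = 0..n. (n - k) choose k)"
    by (subst sum.atLeastAtMost_rev) (rule sum.cong, auto)
  also have "\<dots> = fib (Suc n)"
    by (rule ne_diagonal_fib)
  finally have "(\<Sum>j = 0..<n. j choose (n - j)) + 1 = fib (Suc n)"
    by (simp add: atLeastLessThanSuc_atLeastAtMost[symmetric])
  moreover have "(\<Sum>j = 0..<n. j choose (n - j))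
      = (\<Sum>j = 0..<n div 2. j choose (n - j)) + (\<Sum>j = n div 2..<n. j choose (n - j))"
    by (rule sum.atLeastLessThan_concat[symmetric]) auto
  ultimately show ?thesis
    using lower_half by simp
qed

theorem proposition13:
  fixes n :: nat
  shows "(\<Sum>k = 1..n. \<Sum>j = n div 2..k - 1. (1 / real (n - j)) * real (j choose (n - j)))
         = real (fib (n + 1)) - 1"
proof -
  have "(\<Sum>k = 1..n. \<Sum>j = n div 2..k - 1. (1 / real (n - j)) * real (j choose (n - j)))
      = (\<Sum>j = n div 2..<n. real (n - j) * ((1 / real (n - j)) * real (j choose (n - j))))"
    by (rule sum_triangle_swap)
  also have "\<dots> = real (\<Sum>j = n div 2..<n. j choose (n - j))"
    by (simp add: of_nat_sum)
  also have "\<dots> = real (fib (n + 1)) - 1"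
    using arg_cong[OF sum_choose_diagonal_upper_half[of n], of real] by simp
  finally show ?thesis .
qed

end
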